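(* If $n$ is a positive even integer, then $$\sum_{k=1}^\infty\frac{5^kF_n^{2k}}{L_n^{2k}(2k-1)(2k)(2k+1)}=\ln 2-\ln(L_n)+\frac{n}{\sqrt5}\,\frac{L_{2n}}{F_{2n}}\ln\alpha-\frac12.$$
   Context: $F_n$ and $L_n$ are the Fibonacci and Lucas numbers: $F_0=0,F_1=1$, $L_0=2,L_1=1$, and both satisfy $X_n=X_{n-1}+X_{n-2}$ (extended to all $n\in\mathbb Z$); equivalently $F_n=(\alpha^n-\beta^n)/(\alpha-\beta)$, $L_n=\alpha^n+\beta^n$ with $\alpha=(1+\sqrt5)/2$, $\beta=(1-\sqrt5)/2$. *)

theory Defs
  imports Complex_Main "HOL-Number_Theory.Fib"
begin

fun lucas :: "nat \<Rightarrow> nat" where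
  "lucas 0 = 2"
| "lucas (Suc 0) = 1"
| "lucas (Suc (Suc n)) = lucas (Suc n) + lucas n"

definition golden_alpha :: real where
  "golden_alpha = (1 + sqrt 5) / 2"

end

(*
  Put y = sqrt 5 F_n / L_n.  By Binet's formulas L_n + sqrt 5 F_n = 2 alpha^n and
  L_n - sqrt 5 F_n = 2 beta^n, so (1 + y) / (1 - y) = (alpha / beta)^n, which for even n
  equals alpha^(2n) because alpha beta = -1; hence artanh y = n ln alpha.  For even n the
  same formulas give L_n^2 - 5 F_n^2 = 4, i.e. 1 - y^2 = 4 / L_n^2, and
  (y + 1/y) / 2 = L_2n / (sqrt 5 F_2n).  The series is the sum over k of
  y^(2k) / ((2k-1) 2k (2k+1)); the partial fractions
  1 / ((m-1) m (m+1)) = (1/(m-1) - 2/m + 1/(m+1)) / 2 split it into the power series of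
  artanh y and of ln (1 - y^2), with sum ((y + 1/y) artanh y + ln (1 - y^2) - 1) / 2.
*)

theory Submission
  imports Defs "HOL-Analysis.Complex_Transcendental"
begin

definition golden_beta :: real where
  "golden_beta = (1 - sqrt 5) / 2"

lemma golden_alpha_pos: "golden_alpha > 0"
  by (simp add: golden_alpha_def add_pos_nonneg)

lemma golden_alpha_times_beta: "golden_alpha * golden_beta = -1"
  by (simp add: golden_alpha_def golden_beta_def field_simps)

lemma fib_binet: "real (fib n) = (golden_alpha ^ n - golden_beta ^ n) / sqrt 5"
  unfolding golden_alpha_def golden_beta_def by (rule fib_closed_form)

lemma lucas_binet: "real (lucas n) = golden_alpha ^ n + golden_beta ^ n"
proof (induction n rule: lucas.induct)
  case (3 n)
  have "golden_alpha ^ 2 = golden_alpha + 1" "golden_beta ^ 2 = golden_beta + 1"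
    by (simp_all add: golden_alpha_def golden_beta_def field_simps power2_eq_square)
  moreover have "x ^ Suc (Suc n) = x ^ Suc n + x ^ n" if "x ^ 2 = x + 1" for x :: real
  proof -
    have "x ^ Suc (Suc n) = x ^ n * x ^ 2"
      by (simp add: power2_eq_square mult_ac)
    with that show ?thesis
      by (simp add: algebra_simps)
  qed
  ultimately show ?case
    using 3 by simp
qed (simp_all add: golden_alpha_def golden_beta_def field_simps)

lemma lucas_pos: "lucas n > 0"
  by (induction n rule: lucas.induct) simp_all

lemma lucas_plus_sqrt5_fib: "real (lucas n) + sqrt 5 * real (fib n) = 2 * golden_alpha ^ n"
  by (simp add: lucas_binet fib_binet)

lemma lucas_minus_sqrt5_fib: "real (lucas n) - sqrt 5 * real (fib n) = 2 * golden_beta ^ n"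
  by (simp add: lucas_binet fib_binet)

lemma lucas_square_minus_5_fib_square:
  "real (lucas n) ^ 2 - 5 * real (fib n) ^ 2 = 4 * (-1) ^ n"
proof -
  have "real (lucas n) ^ 2 - 5 * real (fib n) ^ 2
      = (real (lucas n) + sqrt 5 * real (fib n)) * (real (lucas n) - sqrt 5 * real (fib n))"
    by (simp add: algebra_simps power2_eq_square)
  also have "\<dots> = 4 * (golden_alpha * golden_beta) ^ n"
    by (simp add: lucas_plus_sqrt5_fib lucas_minus_sqrt5_fib power_mult_distrib)
  finally show ?thesis by (simp add: golden_alpha_times_beta)
qed

lemma fib_double: "fib (2 * n) = fib n * lucas n"
proof -
  have "real (fib (2 * n)) = real (fib n) * real (lucas n)"
    by (simp add: fib_binet lucas_binet power_mult power2_eq_square algebra_simps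
        flip: power_mult_distrib)
  then show ?thesis by (simp flip: of_nat_mult)
qed

lemma lucas_double: "real (lucas (2 * n)) = real (lucas n) ^ 2 - 2 * (-1) ^ n"
proof -
  have "real (lucas (2 * n)) = real (lucas n) ^ 2 - 2 * (golden_alpha * golden_beta) ^ n"
    by (simp add: lucas_binet power_mult power2_eq_square algebra_simps)
  then show ?thesis by (simp add: golden_alpha_times_beta)
qed

lemma artanh_series:
  fixes y :: real
  assumes "\<bar>y\<bar> < 1"
  shows "(\<lambda>k. y ^ (2 * k + 1) / real (2 * k + 1)) sums artanh y"
proof -
  define x where "x = (1 + y) / (1 - y)"
  have "x > 0" "(x - 1) / (x + 1) = y"
    using assms by (auto simp: x_def field_simps)
  from \<open>x > 0\<close>
  have "(\<lambda>k. 2 * ((x - 1) / (x + 1)) ^ (2 * k + 1) / real (2 * k + 1)) sums ln x"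
    by (rule ln_series_quadratic)
  then have "(\<lambda>k. 2 * (y ^ (2 * k + 1) / real (2 * k + 1))) sums (2 * artanh y)"
    unfolding \<open>(x - 1) / (x + 1) = y\<close> by (simp add: artanh_def x_def)
  from sums_mult_D[OF this] show ?thesis
    by simp
qed

lemma ln_one_minus_square_series:
  fixes y :: real
  assumes "\<bar>y\<bar> < 1"
  shows "(\<lambda>k. y ^ (2 * k + 2) / real (2 * k + 2)) sums (- ln (1 - y ^ 2) / 2)"
proof -
  have "\<bar>- (y ^ 2)\<bar> < 1"
    using assms by (simp add: abs_square_less_1)
  from ln_series'[OF this] have "(\<lambda>k. - ((y ^ 2) ^ k) / real k) sums ln (1 - y ^ 2)"
    by simp
  then have "(\<lambda>k. - ((y ^ 2) ^ Suc k) / real (Suc k)) sums ln (1 - y ^ 2)"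
    by (subst sums_Suc_iff) simp
  moreover have "(y ^ 2) ^ Suc k = y ^ (2 * k + 2)" for k
    unfolding power_mult [symmetric] by simp
  ultimately have "(\<lambda>k. y ^ (2 * k + 2) / real (Suc k)) sums (- ln (1 - y ^ 2))"
    using sums_minus by fastforce
  from sums_divide[OF this, of 2] show ?thesis
    by (simp add: mult_ac)
qed

lemma consecutive_triple_partial_fractions:
  fixes m z :: real
  assumes "m \<notin> {-1, 0, 1}"
  shows "z / ((m - 1) * m * (m + 1)) = (z / (m - 1) - 2 * (z / m) + z / (m + 1)) / 2"
proof -
  have "m - 1 \<noteq> 0" "m \<noteq> 0" "m + 1 \<noteq> 0"
    using assms by auto
  then show ?thesis
    by (simp add: divide_simps) (simp add: algebra_simps)
qed

lemma even_power_series_over_consecutive_triples: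
  fixes y :: real
  assumes "y \<noteq> 0" and "\<bar>y\<bar> < 1"
  shows "(\<lambda>k. y ^ (2 * (k + 1)) /
            ((2 * real (k + 1) - 1) * (2 * real (k + 1)) * (2 * real (k + 1) + 1)))
         sums (((y + 1 / y) * artanh y + ln (1 - y ^ 2) - 1) / 2)"
proof -
  note artanh = artanh_series[OF assms(2)]
  have odd: "(\<lambda>k. y ^ (2 * k + 2) / real (2 * k + 1)) sums (y * artanh y)"
    using sums_mult[OF artanh, of y] by (simp add: mult_ac)
  have "(\<lambda>k. y ^ (2 * Suc k + 1) / real (2 * Suc k + 1)) sums (artanh y - y)"
    using artanh by (subst sums_Suc_iff) simp
  from sums_divide[OF this, of y]
  have next_odd: "(\<lambda>k. y ^ (2 * k + 2) / real (2 * k + 3)) sums ((artanh y - y) / y)"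
    using assms(1) by (simp add: ac_simps)
  have series: "(\<lambda>k. (y ^ (2 * k + 2) / real (2 * k + 1)
                      - 2 * (y ^ (2 * k + 2) / real (2 * k + 2))
                      + y ^ (2 * k + 2) / real (2 * k + 3)) / 2)
        sums ((y * artanh y - 2 * (- ln (1 - y ^ 2) / 2) + (artanh y - y) / y) / 2)"
    by (intro sums_divide sums_add sums_diff sums_mult odd next_odd
        ln_one_minus_square_series[OF assms(2)])
  have sum_eq: "(y * artanh y - 2 * (- ln (1 - y ^ 2) / 2) + (artanh y - y) / y) / 2
      = ((y + 1 / y) * artanh y + ln (1 - y ^ 2) - 1) / 2"
    using assms(1) by (simp add: field_simps)
  have term_eq: "(y ^ (2 * k + 2) / real (2 * k + 1)
                   - 2 * (y ^ (2 * k + 2) / real (2 * k + 2))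
                   + y ^ (2 * k + 2) / real (2 * k + 3)) / 2
      = y ^ (2 * (k + 1)) / ((2 * real (k + 1) - 1) * (2 * real (k + 1)) * (2 * real (k + 1) + 1))"
    for k
  proof -
    define m where "m = 2 * real (k + 1)"
    have casts: "real (2 * k + 1) = m - 1" "real (2 * k + 2) = m" "real (2 * k + 3) = m + 1"
      by (simp_all add: m_def)
    have exponent: "2 * k + 2 = 2 * (k + 1)"
      by simp
    have "m \<notin> {-1, 0, 1}"
      by (auto simp: m_def)
    from consecutive_triple_partial_fractions [OF this] show ?thesis
      unfolding casts unfolding exponent m_def [symmetric] by (rule sym)
  qed
  show ?thesis
    using series unfolding sum_eq term_eq .
qed

text \<open>For even \<open>n\<close> this is \<open>tanh (n ln \<alpha>)\<close>.\<close>

definition fib_lucas_ratio :: "nat \<Rightarrow> real" where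
  "fib_lucas_ratio n = sqrt 5 * real (fib n) / real (lucas n)"

lemma fib_lucas_ratio_even_power:
  "fib_lucas_ratio n ^ (2 * k) = 5 ^ k * real (fib n) ^ (2 * k) / real (lucas n) ^ (2 * k)"
  by (simp add: fib_lucas_ratio_def power_mult power_divide power_mult_distrib)

lemma one_minus_fib_lucas_ratio_square:
  assumes "even n"
  shows "1 - fib_lucas_ratio n ^ 2 = 4 / real (lucas n) ^ 2"
proof -
  have "real (lucas n) ^ 2 > 0"
    using lucas_pos[of n] by simp
  moreover have "fib_lucas_ratio n ^ 2 = 5 * real (fib n) ^ 2 / real (lucas n) ^ 2"
    using fib_lucas_ratio_even_power[of n 1] by simp
  ultimately have "1 - fib_lucas_ratio n ^ 2
      = (real (lucas n) ^ 2 - 5 * real (fib n) ^ 2) / real (lucas n) ^ 2"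
    by (simp add: diff_divide_distrib)
  also have "real (lucas n) ^ 2 - 5 * real (fib n) ^ 2 = 4"
    using lucas_square_minus_5_fib_square[of n] assms by simp
  finally show ?thesis .
qed

lemma ln_one_minus_fib_lucas_ratio_square:
  assumes "even n"
  shows "ln (1 - fib_lucas_ratio n ^ 2) = 2 * (ln 2 - ln (real (lucas n)))"
proof -
  have "1 - fib_lucas_ratio n ^ 2 = (2 / real (lucas n)) ^ 2"
    using one_minus_fib_lucas_ratio_square[OF assms] by (simp add: power_divide)
  with lucas_pos[of n] show ?thesis
    by (simp add: ln_realpow ln_div)
qed

lemma fib_lucas_ratio_bounds:
  assumes "n > 0" and "even n"
  shows "0 < fib_lucas_ratio n" and "fib_lucas_ratio n < 1"
proof -
  show "0 < fib_lucas_ratio n"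
    using fib_neq_0_nat[OF assms(1)] lucas_pos[of n] by (simp add: fib_lucas_ratio_def)
  have "4 / real (lucas n) ^ 2 > 0"
    using lucas_pos[of n] by simp
  then have "fib_lucas_ratio n ^ 2 < 1"
    using one_minus_fib_lucas_ratio_square[OF assms(2)] by linarith
  then have "fib_lucas_ratio n ^ 2 < 1 ^ 2"
    by simp
  then show "fib_lucas_ratio n < 1"
    by (rule power_less_imp_less_base) simp
qed

lemma artanh_fib_lucas_ratio:
  assumes "even n"
  shows "artanh (fib_lucas_ratio n) = real n * ln golden_alpha"
proof -
  have L: "real (lucas n) \<noteq> 0"
    using lucas_pos[of n] by simp
  have "golden_alpha ^ n * golden_beta ^ n = (golden_alpha * golden_beta) ^ n"
    by (rule power_mult_distrib [symmetric])
  also have "\<dots> = 1"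
    using assms by (simp add: golden_alpha_times_beta)
  finally have beta: "golden_beta ^ n = 1 / golden_alpha ^ n"
    using golden_alpha_pos by (simp add: eq_divide_eq mult.commute)
  have "1 + fib_lucas_ratio n = (real (lucas n) + sqrt 5 * real (fib n)) / real (lucas n)"
    using L by (simp add: fib_lucas_ratio_def add_divide_distrib)
  moreover have "1 - fib_lucas_ratio n = (real (lucas n) - sqrt 5 * real (fib n)) / real (lucas n)"
    using L by (simp add: fib_lucas_ratio_def diff_divide_distrib)
  ultimately have "(1 + fib_lucas_ratio n) / (1 - fib_lucas_ratio n)
      = golden_alpha ^ n / golden_beta ^ n"
    using L by (simp add: lucas_plus_sqrt5_fib lucas_minus_sqrt5_fib)
  also have "\<dots> = golden_alpha ^ (2 * n)"
    by (simp add: beta mult_2 power_add)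
  finally show ?thesis
    using golden_alpha_pos by (simp add: artanh_def ln_realpow)
qed

lemma fib_lucas_ratio_plus_inverse:
  assumes "n > 0" and "even n"
  shows "fib_lucas_ratio n + 1 / fib_lucas_ratio n
    = 2 * real (lucas (2 * n)) / (sqrt 5 * real (fib (2 * n)))"
proof -
  have F: "real (fib n) > 0" and L: "real (lucas n) > 0"
    using fib_neq_0_nat[OF assms(1)] lucas_pos[of n] by simp_all
  have "fib_lucas_ratio n + 1 / fib_lucas_ratio n
      = (5 * real (fib n) ^ 2 + real (lucas n) ^ 2) / (sqrt 5 * real (fib n) * real (lucas n))"
    using F L by (simp add: fib_lucas_ratio_def field_simps power2_eq_square)
  also have "5 * real (fib n) ^ 2 = real (lucas n) ^ 2 - 4"
    using lucas_square_minus_5_fib_square[of n] assms(2) by simp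
  also have "real (lucas n) ^ 2 - 4 + real (lucas n) ^ 2 = 2 * real (lucas (2 * n))"
    using lucas_double[of n] assms(2) by simp
  also have "sqrt 5 * real (fib n) * real (lucas n) = sqrt 5 * real (fib (2 * n))"
    by (simp add: fib_double)
  finally show ?thesis .
qed

theorem theorem10:
  fixes n :: nat
  assumes "n > 0" and "even n"
  shows "(\<lambda>k. 5 ^ (k+1) * real (fib n) ^ (2*(k+1)) /
            (real (lucas n) ^ (2*(k+1)) * (2*real (k+1) - 1) * (2*real (k+1)) * (2*real (k+1) + 1)))
         sums (ln 2 - ln (real (lucas n))
               + real n / sqrt 5 * (real (lucas (2*n)) / real (fib (2*n))) * ln golden_alpha - 1/2)"
proof -
  define r where "r = fib_lucas_ratio n"
  have "r \<noteq> 0" "\<bar>r\<bar> < 1"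
    using fib_lucas_ratio_bounds[OF assms] by (simp_all add: r_def)
  from even_power_series_over_consecutive_triples[OF this]
  have series: "(\<lambda>k. r ^ (2 * (k + 1)) /
      ((2 * real (k + 1) - 1) * (2 * real (k + 1)) * (2 * real (k + 1) + 1)))
    sums (((r + 1 / r) * artanh r + ln (1 - r ^ 2) - 1) / 2)" .
  have sum_eq: "((r + 1 / r) * artanh r + ln (1 - r ^ 2) - 1) / 2
      = ln 2 - ln (real (lucas n))
        + real n / sqrt 5 * (real (lucas (2*n)) / real (fib (2*n))) * ln golden_alpha - 1/2"
    unfolding r_def fib_lucas_ratio_plus_inverse[OF assms] artanh_fib_lucas_ratio[OF assms(2)]
      ln_one_minus_fib_lucas_ratio_square[OF assms(2)]
    by (simp add: field_simps)
  show ?thesis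
    using series unfolding sum_eq unfolding r_def fib_lucas_ratio_even_power
    by (simp only: divide_divide_eq_left mult.assoc)
qed

end
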